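(* A graph $G$ is a pseudo-cograph if and only if every induced subgraph of $G$ is a pseudo-cograph.
   Context: Graphs finite, simple, undirected; $G-v$ is $G$ with $v$ deleted; the join of vertex-disjoint graphs adds all edges between them to the disjoint union; a cograph is a graph without induced $P_4$. $G$ is a pseudo-cograph if $|V(G)|\le2$ or there are induced subgraphs $G_1,G_2$ of $G$ and $v\in V(G)$ with (F1) $V(G)=V(G_1)\cup V(G_2)$, $V(G_1)\cap V(G_2)=\{v\}$, $|V(G_1)|,|V(G_2)|>1$; (F2) $G_1,G_2$ are cographs; (F3) $G-v$ is the join or the disjoint union of $G_1-v$ and $G_2-v$. *)

theory Defs
  imports Main
begin

text \<open>The induced
subgraph on W \<subseteq> V is (W, E): E is only ever consulted on vertices of W.\<close>

definition graph :: "'a set \<Rightarrow> ('a \<Rightarrow> 'a \<Rightarrow> bool) \<Rightarrow> bool" where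
  "graph V E \<longleftrightarrow> finite V \<and> (\<forall>x\<in>V. \<forall>y\<in>V. E x y \<longleftrightarrow> E y x) \<and> (\<forall>x\<in>V. \<not> E x x)"

definition cograph :: "'a set \<Rightarrow> ('a \<Rightarrow> 'a \<Rightarrow> bool) \<Rightarrow> bool" where
  "cograph V E \<longleftrightarrow> \<not> (\<exists>a\<in>V. \<exists>b\<in>V. \<exists>c\<in>V. \<exists>d\<in>V. distinct [a, b, c, d] \<and>
      E a b \<and> E b c \<and> E c d \<and> \<not> E a c \<and> \<not> E b d \<and> \<not> E a d)"

text \<open>(F3): G - v is the join (all edges between the two parts) or the disjoint
union (no edges between the two parts) of G1 - v and G2 - v; the edges inside
each part agree automatically since G1, G2 are induced subgraphs.\<close>
definition pseudo_cograph :: "'a set \<Rightarrow> ('a \<Rightarrow> 'a \<Rightarrow> bool) \<Rightarrow> bool" where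
  "pseudo_cograph V E \<longleftrightarrow> card V \<le> 2 \<or>
     (\<exists>V1 V2 v. V1 \<subseteq> V \<and> V2 \<subseteq> V \<and> v \<in> V \<and>
        V = V1 \<union> V2 \<and> V1 \<inter> V2 = {v} \<and> card V1 > 1 \<and> card V2 > 1 \<and>
        cograph V1 E \<and> cograph V2 E \<and>
        ((\<forall>x\<in>V1 - {v}. \<forall>y\<in>V2 - {v}. E x y) \<or>
         (\<forall>x\<in>V1 - {v}. \<forall>y\<in>V2 - {v}. \<not> E x y)))"

end

theory Submission
  imports Defs
begin

text \<open>A cograph on at least two vertices is the join or the disjoint union of two nonempty
parts. This follows by adding one vertex u at a time: if the other vertices split as a
disjoint union of A and B (a join is a disjoint union in the complement), then either u
misses a whole side, or u sees every vertex, or the non-neighbours of u are cut off from the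
rest of the graph. Hence a cograph W with at least three vertices is a pseudo-cograph: if
A has two vertices and a \<in> A, take the cographs A and B \<union> {a}, which meet in a; a vertex
that is complete or anticomplete to a cograph creates no induced P4.

For the theorem, restrict a decomposition (V1, V2, v) of V to W \<subseteq> V. If W lies in one
Vi, it induces a cograph. Otherwise it meets both V1 - {v} and V2 - {v}: if v \<in> W, then
(W \<inter> V1, W \<inter> V2, v) is a decomposition of W, and if not, W is the join or the disjoint
union of the cographs W \<inter> V1 and W \<inter> V2.\<close>

definition induced_P4 :: "('a \<Rightarrow> 'a \<Rightarrow> bool) \<Rightarrow> 'a \<Rightarrow> 'a \<Rightarrow> 'a \<Rightarrow> 'a \<Rightarrow> bool" where
  "induced_P4 E a b c d \<longleftrightarrow> distinct [a, b, c, d] \<and>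
     E a b \<and> E b c \<and> E c d \<and> \<not> E a c \<and> \<not> E b d \<and> \<not> E a d"

lemma symp_on_complement: "symp_on A R \<Longrightarrow> symp_on A (\<lambda>x y. \<not> R x y)"
  unfolding symp_on_def by blast

lemma cograph_iff_no_induced_P4:
  "cograph V E \<longleftrightarrow> (\<forall>a\<in>V. \<forall>b\<in>V. \<forall>c\<in>V. \<forall>d\<in>V. \<not> induced_P4 E a b c d)"
  unfolding cograph_def induced_P4_def by blast

lemma cograph_subset: "cograph V E \<Longrightarrow> W \<subseteq> V \<Longrightarrow> cograph W E"
  unfolding cograph_def by blast

lemma induced_P4_complement:
  assumes "symp_on V E" and "{a, b, c, d} \<subseteq> V" and "induced_P4 (\<lambda>x y. \<not> E x y) a b c d"
  shows "induced_P4 E c a d b"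
  using assms by (auto simp: induced_P4_def symp_on_def)

lemma cograph_complement:
  assumes "symp_on V E" and "cograph V E"
  shows "cograph V (\<lambda>x y. \<not> E x y)"
  using assms induced_P4_complement[OF assms(1)]
  unfolding cograph_iff_no_induced_P4 by (metis empty_subsetI insert_subset)

lemma induced_P4_neighbour_and_non_neighbour:
  assumes "symp_on V E" and "{a, b, c, d} \<subseteq> V" and "induced_P4 E a b c d"
    and "x \<in> {a, b, c, d}"
  shows "\<exists>y\<in>{a, b, c, d} - {x}. E x y" and "\<exists>y\<in>{a, b, c, d} - {x}. \<not> E x y"
  using assms by (auto simp: induced_P4_def symp_on_def)

definition complete_or_anticomplete :: "('a \<Rightarrow> 'a \<Rightarrow> bool) \<Rightarrow> 'a set \<Rightarrow> 'a set \<Rightarrow> bool" where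
  "complete_or_anticomplete E A B \<longleftrightarrow> (\<forall>x\<in>A. \<forall>y\<in>B. E x y) \<or> (\<forall>x\<in>A. \<forall>y\<in>B. \<not> E x y)"

lemma complete_or_anticomplete_commute:
  "symp_on (A \<union> B) E \<Longrightarrow> complete_or_anticomplete E B A \<longleftrightarrow> complete_or_anticomplete E A B"
  unfolding complete_or_anticomplete_def symp_on_def by blast

lemma complete_or_anticomplete_mono:
  "complete_or_anticomplete E A B \<Longrightarrow> A' \<subseteq> A \<Longrightarrow> B' \<subseteq> B \<Longrightarrow> complete_or_anticomplete E A' B'"
  unfolding complete_or_anticomplete_def by blast

lemma cograph_insert_complete_or_anticomplete:
  assumes sym: "symp_on (insert a B) E" and cog: "cograph B E"
    and hom: "complete_or_anticomplete E {a} B"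
  shows "cograph (insert a B) E"
  unfolding cograph_iff_no_induced_P4
proof (intro ballI notI)
  fix p q r s assume in_aB: "p \<in> insert a B" "q \<in> insert a B" "r \<in> insert a B" "s \<in> insert a B"
    and P4: "induced_P4 E p q r s"
  show False
  proof (cases "a \<in> {p, q, r, s}")
    case False
    then show False using in_aB P4 cog unfolding cograph_iff_no_induced_P4 by blast
  next
    case True
    have sub: "{p, q, r, s} \<subseteq> insert a B" and rest: "{p, q, r, s} - {a} \<subseteq> B"
      using in_aB by auto
    show False
      using induced_P4_neighbour_and_non_neighbour[OF sym sub P4 True] rest hom
      unfolding complete_or_anticomplete_def by blast
  qed
qed

definition decomposable :: "'a set \<Rightarrow> ('a \<Rightarrow> 'a \<Rightarrow> bool) \<Rightarrow> bool" where
  "decomposable W E \<longleftrightarrow> (\<exists>A B. A \<noteq> {} \<and> B \<noteq> {} \<and> A \<union> B = W \<and> A \<inter> B = {} \<and>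
     complete_or_anticomplete E A B)"

lemma decomposableI:
  "A \<noteq> {} \<Longrightarrow> B \<noteq> {} \<Longrightarrow> A \<union> B = W \<Longrightarrow> A \<inter> B = {} \<Longrightarrow> complete_or_anticomplete E A B
    \<Longrightarrow> decomposable W E"
  unfolding decomposable_def by blast

lemma decomposable_complement: "decomposable W (\<lambda>x y. \<not> E x y) \<longleftrightarrow> decomposable W E"
  unfolding decomposable_def complete_or_anticomplete_def by auto

lemma anticomplete_swap:
  "symp_on W E \<Longrightarrow> A \<subseteq> W \<Longrightarrow> B \<subseteq> W \<Longrightarrow> \<forall>x\<in>A. \<forall>y\<in>B. \<not> E x y \<Longrightarrow> \<forall>x\<in>B. \<forall>y\<in>A. \<not> E x y"
  unfolding symp_on_def by blast

lemma decomposable_if_vertex_anticomplete_to_side: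
  assumes sym: "symp_on W E" and u: "u \<in> W"
    and split: "A \<union> B = W - {u}" "A \<inter> B = {}" "B \<noteq> {}"
    and anti: "\<forall>x\<in>A. \<forall>y\<in>B. \<not> E x y" and anti_u: "\<forall>y\<in>B. \<not> E u y"
  shows "decomposable W E"
proof -
  have "\<forall>x\<in>B. \<forall>y\<in>insert u A. \<not> E x y"
  proof (intro ballI notI)
    fix x y assume x: "x \<in> B" and y: "y \<in> insert u A" and "E x y"
    have "x \<in> W" "y \<in> W"
      using x y u split(1) by auto
    with \<open>E x y\<close> have "E y x"
      using sym by (auto simp: symp_on_def)
    then show False using x y anti anti_u by blast
  qed
  moreover have "B \<union> insert u A = W" "B \<inter> insert u A = {}"
    using split(1,2) u by auto
  ultimately show ?thesis
    using split(3)
    by (intro decomposableI[of B "insert u A"]) (auto simp: complete_or_anticomplete_def)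
qed

text \<open>If y and t lie on the same side, y-t-u-z would be an induced path for the neighbour z
of u on the other side.\<close>

lemma cograph_non_neighbour_not_adjacent_to_neighbour:
  assumes sym: "symp_on W E" and cog: "cograph W E" and u: "u \<in> W"
    and split: "A \<union> B = W - {u}" and anti: "\<forall>x\<in>A. \<forall>z\<in>B. \<not> E x z"
    and nbrs: "zA \<in> A" "E u zA" "zB \<in> B" "E u zB"
    and y: "y \<in> W - {u}" "\<not> E u y" and t: "t \<in> W - {u}" "E u t"
  shows "\<not> E y t"
proof
  assume "E y t"
  have E_sym: "\<forall>x\<in>W. \<forall>y\<in>W. E x y \<longleftrightarrow> E y x"
    using sym unfolding symp_on_def by blast
  have anti': "\<forall>x\<in>B. \<forall>z\<in>A. \<not> E x z"
    using split by (intro anticomplete_swap[OF sym _ _ anti]) auto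
  have "E t u" "\<not> E y u"
    using y t u E_sym by auto
  have path: "induced_P4 E y t u z" if "z \<in> W - {u}" "E u z" "\<not> E y z" "\<not> E t z" for z
    using that y t \<open>E y t\<close> \<open>E t u\<close> \<open>\<not> E y u\<close> unfolding induced_P4_def by auto
  have no_path: "\<not> induced_P4 E y t u z" if "z \<in> W" for z
    using cog that y t u unfolding cograph_iff_no_induced_P4 by blast
  consider "y \<in> A" "t \<in> A" | "y \<in> B" "t \<in> B" | "y \<in> A" "t \<in> B" | "y \<in> B" "t \<in> A"
    using y t split by blast
  then show False
  proof cases
    case 1
    then show False using path[of zB] no_path[of zB] nbrs anti split by blast
  next
    case 2
    then show False using path[of zA] no_path[of zA] nbrs anti' split by blast
  qed (use \<open>E y t\<close> anti anti' in blast)+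
qed

lemma cograph_decomposable_if_minus_vertex_disconnected:
  assumes sym: "symp_on W E" and cog: "cograph W E" and u: "u \<in> W"
    and split: "A \<union> B = W - {u}" "A \<inter> B = {}" "A \<noteq> {}" "B \<noteq> {}"
    and anti: "\<forall>x\<in>A. \<forall>y\<in>B. \<not> E x y"
  shows "decomposable W E"
proof -
  have anti': "\<forall>x\<in>B. \<forall>y\<in>A. \<not> E x y"
    using split(1) by (intro anticomplete_swap[OF sym _ _ anti]) auto
  consider "\<forall>y\<in>B. \<not> E u y" | "\<forall>y\<in>A. \<not> E u y" | "\<forall>y\<in>W - {u}. E u y"
    | zA zB where "zA \<in> A" "E u zA" "zB \<in> B" "E u zB" "\<exists>y\<in>W - {u}. \<not> E u y"
    by blast
  then show ?thesis
  proof cases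
    case 1
    show ?thesis by (rule decomposable_if_vertex_anticomplete_to_side[OF sym u split(1,2,4) anti 1])
  next
    case 2
    have "B \<union> A = W - {u}" "B \<inter> A = {}"
      using split(1,2) by auto
    then show ?thesis
      by (rule decomposable_if_vertex_anticomplete_to_side[OF sym u _ _ split(3) anti' 2])
  next
    case 3
    then show ?thesis
      using u split(1,3)
      by (intro decomposableI[of "{u}" "W - {u}"]) (auto simp: complete_or_anticomplete_def)
  next
    case (4 zA zB)
    define M where "M = {y \<in> W - {u}. \<not> E u y}"
    have "\<not> E y t" if "y \<in> M" "t \<in> W - M" for y t
    proof (cases "t = u")
      case True
      then show ?thesis using that u sym unfolding M_def symp_on_def by auto
    next
      case False
      then show ?thesis
        using that cograph_non_neighbour_not_adjacent_to_neighbour[OF sym cog u split(1) anti 4(1-4)]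
        unfolding M_def by blast
    qed
    moreover have "M \<noteq> {}" "W - M \<noteq> {}" "M \<union> (W - M) = W" "M \<inter> (W - M) = {}"
      using 4 u unfolding M_def by auto
    ultimately show ?thesis
      by (intro decomposableI[of M "W - M"]) (auto simp: complete_or_anticomplete_def)
  qed
qed

lemma cograph_decomposable:
  assumes "finite W" and "2 \<le> card W" and "symp_on W E" and "cograph W E"
  shows "decomposable W E"
  using assms
proof (induction W rule: finite_induct)
  case empty
  then show ?case by simp
next
  case (insert u W)
  have u: "u \<in> insert u W" and minus_u: "insert u W - {u} = W"
    using insert.hyps by auto
  have sym: "symp_on W E" and cog: "cograph W E"
    using insert.prems symp_on_subset cograph_subset by (metis subset_insertI)+
  show ?case
  proof (cases "2 \<le> card W")
    case False
    with insert have "card W = 1" by simp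
    then obtain w where "W = {w}" by (rule card_1_singletonE)
    then show ?thesis
      using insert.hyps
      by (intro decomposableI[of "{u}" "{w}"]) (auto simp: complete_or_anticomplete_def)
  next
    case True
    then obtain A B where split: "A \<noteq> {}" "B \<noteq> {}" "A \<union> B = W" "A \<inter> B = {}"
      and hom: "complete_or_anticomplete E A B"
      using insert.IH sym cog unfolding decomposable_def by blast
    from hom consider "\<forall>x\<in>A. \<forall>y\<in>B. E x y" | "\<forall>x\<in>A. \<forall>y\<in>B. \<not> E x y"
      unfolding complete_or_anticomplete_def by blast
    then show ?thesis
    proof cases
      case 1
      then have "\<forall>x\<in>A. \<forall>y\<in>B. \<not> (\<lambda>x y. \<not> E x y) x y" by simp
      then have "decomposable (insert u W) (\<lambda>x y. \<not> E x y)"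
        using cograph_decomposable_if_minus_vertex_disconnected[OF
            symp_on_complement cograph_complement u _ split(4,1,2)]
          insert.prems minus_u split(3) by simp
      then show ?thesis by (simp only: decomposable_complement)
    next
      case 2
      then show ?thesis
        using cograph_decomposable_if_minus_vertex_disconnected[OF _ _ u _ split(4,1,2)]
          insert.prems minus_u split(3) by simp
    qed
  qed
qed

lemma pseudo_cographI:
  assumes "V1 \<union> V2 = V" and "V1 \<inter> V2 = {v}" and "1 < card V1" and "1 < card V2"
    and "cograph V1 E" and "cograph V2 E" and "complete_or_anticomplete E (V1 - {v}) (V2 - {v})"
  shows "pseudo_cograph V E"
  unfolding pseudo_cograph_def
  by (rule disjI2, rule exI[of _ V1], rule exI[of _ V2], rule exI[of _ v])
    (use assms in \<open>auto simp: complete_or_anticomplete_def\<close>)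

lemma one_less_card: "finite A \<Longrightarrow> a \<in> A \<Longrightarrow> A - {a} \<noteq> {} \<Longrightarrow> 1 < card A"
  using card_Diff1_less[of A a] card_gt_0_iff[of "A - {a}"] by simp

lemma pseudo_cograph_join_or_union_two_le_card:
  assumes "finite B" and "symp_on (A \<union> B) E" and "A \<inter> B = {}" and "2 \<le> card A" and "B \<noteq> {}"
    and hom: "complete_or_anticomplete E A B" and "cograph A E" and "cograph B E"
  shows "pseudo_cograph (A \<union> B) E"
proof -
  obtain a where a: "a \<in> A"
    using assms(4) by fastforce
  have hom_a: "complete_or_anticomplete E {a} B"
    using a by (intro complete_or_anticomplete_mono[OF hom]) auto
  have "symp_on (insert a B) E"
    by (rule symp_on_subset[OF assms(2)]) (use a in auto)
  then have "cograph (insert a B) E"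
    using assms(8) hom_a by (rule cograph_insert_complete_or_anticomplete)
  moreover have "insert a B - {a} = B" "A \<inter> insert a B = {a}"
    using a assms(3) by auto
  moreover have "1 < card (insert a B)"
    using a assms(1,3,5) by (intro one_less_card) auto
  moreover have "complete_or_anticomplete E (A - {a}) B"
    by (rule complete_or_anticomplete_mono[OF hom]) auto
  ultimately show ?thesis
    using a assms(4,7) by (intro pseudo_cographI[of A "insert a B" _ a]) auto
qed

lemma pseudo_cograph_join_or_union:
  assumes "finite (A \<union> B)" and "symp_on (A \<union> B) E" and "3 \<le> card (A \<union> B)"
    and "A \<inter> B = {}" and "A \<noteq> {}" and "B \<noteq> {}"
    and "complete_or_anticomplete E A B" and "cograph A E" and "cograph B E"
  shows "pseudo_cograph (A \<union> B) E"
proof (cases "2 \<le> card A")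
  case True
  then show ?thesis
    using assms pseudo_cograph_join_or_union_two_le_card by blast
next
  case False
  have "card (A \<union> B) = card A + card B"
    using assms(1,4) by (simp add: card_Un_disjoint)
  with False assms(3) have "2 \<le> card B" by linarith
  moreover have "complete_or_anticomplete E B A"
    using assms(2,7) complete_or_anticomplete_commute by blast
  ultimately have "pseudo_cograph (B \<union> A) E"
    using assms by (intro pseudo_cograph_join_or_union_two_le_card) (auto simp: Un_commute Int_commute)
  then show ?thesis by (simp add: Un_commute)
qed

lemma cograph_pseudo_cograph:
  assumes "finite W" and "symp_on W E" and "3 \<le> card W" and "cograph W E"
  shows "pseudo_cograph W E"
proof -
  have "decomposable W E"
    using assms by (intro cograph_decomposable) auto
  then obtain A B where "A \<noteq> {}" "B \<noteq> {}" "A \<union> B = W" "A \<inter> B = {}"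
    and "complete_or_anticomplete E A B"
    unfolding decomposable_def by blast
  moreover have "cograph A E" "cograph B E"
    using cograph_subset[OF assms(4)] \<open>A \<union> B = W\<close> by auto
  ultimately have "pseudo_cograph (A \<union> B) E"
    using assms(1-3) by (intro pseudo_cograph_join_or_union) auto
  with \<open>A \<union> B = W\<close> show ?thesis by simp
qed

lemma pseudo_cograph_across_decomposition:
  assumes "finite W" and "symp_on W E" and "3 \<le> card W"
    and "W \<subseteq> V1 \<union> V2" and "V1 \<inter> V2 = {v}" and "cograph V1 E" and "cograph V2 E"
    and hom: "complete_or_anticomplete E (V1 - {v}) (V2 - {v})"
    and meets: "W \<inter> V1 - {v} \<noteq> {}" "W \<inter> V2 - {v} \<noteq> {}"
  shows "pseudo_cograph W E"
proof -
  define W1 W2 where "W1 = W \<inter> V1" and "W2 = W \<inter> V2"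
  have W: "W1 \<union> W2 = W"
    using assms(4) unfolding W1_def W2_def by auto
  have cog: "cograph W1 E" "cograph W2 E"
    unfolding W1_def W2_def by (auto intro: cograph_subset[OF assms(6)] cograph_subset[OF assms(7)])
  have hom': "complete_or_anticomplete E (W1 - {v}) (W2 - {v})"
    by (rule complete_or_anticomplete_mono[OF hom]) (auto simp: W1_def W2_def)
  show ?thesis
  proof (cases "v \<in> W")
    case True
    then have "W1 \<inter> W2 = {v}" "v \<in> W1" "v \<in> W2"
      using assms(5) unfolding W1_def W2_def by auto
    moreover have "finite W1" "finite W2"
      using assms(1) unfolding W1_def W2_def by auto
    ultimately have "1 < card W1" "1 < card W2"
      using meets unfolding W1_def W2_def by (metis one_less_card)+
    with \<open>W1 \<inter> W2 = {v}\<close> show ?thesis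
      using W cog hom' by (intro pseudo_cographI)
  next
    case False
    then have "W1 - {v} = W1" "W2 - {v} = W2" "W1 \<inter> W2 = {}"
      using assms(5) unfolding W1_def W2_def by auto
    then show ?thesis
      using pseudo_cograph_join_or_union[of W1 W2 E] assms(1-3) meets W cog hom'
      unfolding W1_def W2_def by auto
  qed
qed

lemma pseudo_cograph_subset:
  assumes "finite V" and "symp_on V E" and "pseudo_cograph V E" and "W \<subseteq> V"
  shows "pseudo_cograph W E"
proof (cases "card W \<le> 2")
  case True
  then show ?thesis by (simp add: pseudo_cograph_def)
next
  case False
  have W: "finite W" "symp_on W E" "3 \<le> card W"
    using assms False finite_subset symp_on_subset by auto
  have "\<not> card V \<le> 2"
    using False card_mono[OF assms(1,4)] by linarith
  then obtain V1 V2 v where "V1 \<union> V2 = V" "V1 \<inter> V2 = {v}" "cograph V1 E" "cograph V2 E"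
    and hom: "complete_or_anticomplete E (V1 - {v}) (V2 - {v})"
    using assms(3) unfolding pseudo_cograph_def complete_or_anticomplete_def by auto
  consider "W \<subseteq> V1" | "W \<subseteq> V2" | "W \<inter> V1 - {v} \<noteq> {}" "W \<inter> V2 - {v} \<noteq> {}"
    using \<open>V1 \<union> V2 = V\<close> \<open>V1 \<inter> V2 = {v}\<close> assms(4) by auto
  then show ?thesis
  proof cases
    case 1
    then show ?thesis
      using W cograph_subset[OF \<open>cograph V1 E\<close>] by (intro cograph_pseudo_cograph) auto
  next
    case 2
    then show ?thesis
      using W cograph_subset[OF \<open>cograph V2 E\<close>] by (intro cograph_pseudo_cograph) auto
  next
    case 3
    then show ?thesis
      using W \<open>V1 \<union> V2 = V\<close> assms(4) \<open>V1 \<inter> V2 = {v}\<close> \<open>cograph V1 E\<close> \<open>cograph V2 E\<close> hom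
      by (intro pseudo_cograph_across_decomposition[of W E V1 V2 v]) auto
  qed
qed

theorem mainTheorem9:
  fixes V :: "'a set" and E :: "'a \<Rightarrow> 'a \<Rightarrow> bool"
  assumes "graph V E"
  shows "pseudo_cograph V E \<longleftrightarrow> (\<forall>W. W \<subseteq> V \<longrightarrow> pseudo_cograph W E)"
proof -
  have "finite V" and "symp_on V E"
    using assms unfolding graph_def symp_on_def by auto
  then show ?thesis
    using pseudo_cograph_subset by blast
qed

end
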